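(* Let $X=[X_{\alpha\beta}]_{\alpha,\beta=1}^K$ be a positive definite matrix partitioned into $K\times K$ blocks $X_{\alpha\beta}\in\mathbb{C}^{d\times d}$. If $X$ is block diagonally dominant, i.e. for every $\alpha$, $$\|X_{\alpha\alpha}^{-1}\|^{-1}\ \ge\ \sum_{\beta\neq\alpha}\|X_{\alpha\beta}\|,$$ then $X$ has block coherence number at most two, i.e. $X\in\mathcal{BC}_2$.
   Context: $\|Y\|$ denotes the largest singular value of $Y$; for positive definite $X_{\alpha\alpha}$, $\|X_{\alpha\alpha}^{-1}\|^{-1}$ is the smallest eigenvalue of $X_{\alpha\alpha}$. Let $P_\alpha$ be the orthogonal projector onto the $\alpha$-th block of coordinates ($\mathbb{C}^{Kd}=\bigoplus_\alpha\mathbb{C}^d$). $\mathcal{BC}_k$ is the set of all finite sums of operators $|\psi\rangle\langle\psi|$ where $|\psi\rangle$ has at most $k$ nonzero components $P_\alpha|\psi\rangle$; the block coherence number $bcn(X)$ is the least $k$ with $X\in\mathcal{BC}_k$. *)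

theory Defs
  imports "HOL-Analysis.Analysis"
begin

text \<open>A matrix on C^(Kd) = direct sum of K copies of C^d, indexed by pairs (alpha, i)
  with alpha a block index (type 'k) and i a coordinate inside the block (type 'd).\<close>

type_synonym ('k, 'd) bmat = "complex ^ ('k \<times> 'd) ^ ('k \<times> 'd)"
type_synonym ('k, 'd) bvec = "complex ^ ('k \<times> 'd)"

definition quad_form :: "complex ^ 'n::finite ^ 'n \<Rightarrow> complex ^ 'n \<Rightarrow> complex" where
  "quad_form A x = (\<Sum>i\<in>UNIV. \<Sum>j\<in>UNIV. cnj (x $ i) * A $ i $ j * x $ j)"

definition hermitian_mat :: "complex ^ 'n::finite ^ 'n \<Rightarrow> bool" where
  "hermitian_mat A \<longleftrightarrow> (\<forall>i j. A $ i $ j = cnj (A $ j $ i))"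

definition pos_def :: "complex ^ 'n::finite ^ 'n \<Rightarrow> bool" where
  "pos_def A \<longleftrightarrow> hermitian_mat A \<and>
     (\<forall>x. x \<noteq> 0 \<longrightarrow> quad_form A x \<in> \<real> \<and> Re (quad_form A x) > 0)"

definition opnorm :: "complex ^ 'n::finite ^ 'm::finite \<Rightarrow> real" where
  "opnorm A = onorm (\<lambda>v. A *v v)"

definition blk :: "('k::finite, 'd::finite) bmat \<Rightarrow> 'k \<Rightarrow> 'k \<Rightarrow> complex ^ 'd ^ 'd" where
  "blk X \<alpha> \<beta> = (\<chi> i j. X $ (\<alpha>, i) $ (\<beta>, j))"

definition block_diag_dominant :: "('k::finite, 'd::finite) bmat \<Rightarrow> bool" where
  "block_diag_dominant X \<longleftrightarrow>
     (\<forall>\<alpha>. inverse (opnorm (matrix_inv (blk X \<alpha> \<alpha>))) \<ge> (\<Sum>\<beta>\<in>UNIV - {\<alpha>}. opnorm (blk X \<alpha> \<beta>)))"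

definition block_comp :: "('k::finite, 'd::finite) bvec \<Rightarrow> 'k \<Rightarrow> complex ^ 'd" where
  "block_comp \<psi> \<alpha> = (\<chi> i. \<psi> $ (\<alpha>, i))"

definition block_support :: "('k::finite, 'd::finite) bvec \<Rightarrow> 'k set" where
  "block_support \<psi> = {\<alpha>. block_comp \<psi> \<alpha> \<noteq> 0}"

definition outer :: "complex ^ 'n::finite \<Rightarrow> complex ^ 'n ^ 'n" where
  "outer \<psi> = (\<chi> i j. \<psi> $ i * cnj (\<psi> $ j))"

definition BC :: "nat \<Rightarrow> ('k::finite, 'd::finite) bmat set" where
  "BC k = {X. \<exists>\<psi>s. (\<forall>\<psi>\<in>set \<psi>s. card (block_support \<psi>) \<le> k) \<and> X = sum_list (map outer \<psi>s)}"

end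

theory Submission
  imports Defs
begin

text \<open>
  Split X into positive semidefinite pieces, each supported on at most two blocks. For each
  ordered pair of distinct blocks a, b take half of X_ab and X_ba off the diagonal, padded by
  ||X_ab||/2 and ||X_ba||/2 times the identity on the diagonal blocks a and b; by Cauchy-Schwarz
  and AM-GM this piece is positive semidefinite. What remains is, on each diagonal block,
  X_aa - (sum of ||X_ab|| over b /= a) I, which is positive semidefinite precisely by block
  diagonal dominance, because the smallest eigenvalue of X_aa is 1/||X_aa^-1||. Finally, a
  positive semidefinite matrix supported on the coordinates of some blocks is a sum of rank-one
  matrices psi psi^* with psi supported there (peel off one coordinate at a time by a Schur
  complement step), and BC k is closed under sums.
\<close>

section \<open>Sesquilinear forms and positive semidefinite matrices\<close>

definition cinner :: "complex ^ 'n::finite \<Rightarrow> complex ^ 'n \<Rightarrow> complex" where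
  "cinner x y = (\<Sum>i\<in>UNIV. cnj (x $ i) * y $ i)"

lemma cinner_add_left: "cinner (x + y) z = cinner x z + cinner y z"
  by (simp add: cinner_def distrib_right sum.distrib)

lemma cinner_add_right: "cinner x (y + z) = cinner x y + cinner x z"
  by (simp add: cinner_def distrib_left sum.distrib)

lemma cinner_scale_left: "cinner (c *s x) y = cnj c * cinner x y"
  by (simp add: cinner_def sum_distrib_left mult.assoc)

lemma cinner_scale_right: "cinner x (c *s y) = c * cinner x y"
  by (simp add: cinner_def sum_distrib_left mult.left_commute)

lemma cinner_self: "cinner x x = of_real ((norm x)\<^sup>2)"
proof -
  have "cinner x x = (\<Sum>i\<in>UNIV. of_real ((cmod (x $ i))\<^sup>2))"
    unfolding cinner_def by (intro sum.cong refl) (metis complex_norm_square mult.commute)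
  then show ?thesis by (simp add: norm_vec_def L2_set_def sum_nonneg)
qed

lemma norm_cinner_le: "cmod (cinner x y) \<le> norm x * norm y"
proof -
  have "cmod (cinner x y) \<le> (\<Sum>i\<in>UNIV. \<bar>cmod (x $ i)\<bar> * \<bar>cmod (y $ i)\<bar>)"
    unfolding cinner_def by (rule order_trans[OF norm_sum]) (simp add: norm_mult)
  also have "\<dots> \<le> L2_set (\<lambda>i. cmod (x $ i)) UNIV * L2_set (\<lambda>i. cmod (y $ i)) UNIV"
    by (rule L2_set_mult_ineq)
  finally show ?thesis by (simp add: norm_vec_def)
qed

lemma cinner_adjoint:
  assumes "\<And>i j. B $ j $ i = cnj (A $ i $ j)"
  shows "cinner y (B *v x) = cnj (cinner x (A *v y))"
proof -
  have "cnj (cinner x (A *v y)) = (\<Sum>i\<in>UNIV. \<Sum>j\<in>UNIV. cnj (y $ j) * B $ j $ i * x $ i)"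
    unfolding cinner_def matrix_vector_mult_def cnj_sum complex_cnj_mult complex_cnj_cnj
      sum_distrib_left
    by (intro sum.cong refl) (simp add: assms sum_distrib_left mult_ac)
  also have "\<dots> = (\<Sum>j\<in>UNIV. \<Sum>i\<in>UNIV. cnj (y $ j) * B $ j $ i * x $ i)"
    by (rule sum.swap)
  also have "\<dots> = cinner y (B *v x)"
    by (simp add: cinner_def matrix_vector_mult_def sum_distrib_left mult.assoc)
  finally show ?thesis by simp
qed

lemma hermitian_mat_cnj: "hermitian_mat A \<Longrightarrow> cnj (A $ i $ j) = A $ j $ i"
  unfolding hermitian_mat_def by (metis complex_cnj_cnj)

lemma cinner_hermitian: "hermitian_mat A \<Longrightarrow> cinner y (A *v x) = cnj (cinner x (A *v y))"
  by (rule cinner_adjoint) (simp add: hermitian_mat_cnj)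

lemma quad_form_eq_cinner: "quad_form A x = cinner x (A *v x)"
  by (simp add: quad_form_def cinner_def matrix_vector_mult_def sum_distrib_left mult.assoc)

lemma quad_form_add_scaled:
  "quad_form A (x + c *s y) =
     quad_form A x + c * cinner x (A *v y) + cnj c * cinner y (A *v x) + cnj c * c * quad_form A y"
  unfolding quad_form_eq_cinner matrix_vector_right_distrib vector_scalar_commute
    cinner_add_left cinner_add_right cinner_scale_left cinner_scale_right
  by (simp add: distrib_left add.assoc)

definition pos_semidef :: "complex ^ 'n::finite ^ 'n \<Rightarrow> bool" where
  "pos_semidef A \<longleftrightarrow> hermitian_mat A \<and> (\<forall>x. 0 \<le> Re (quad_form A x))"

lemma discriminant_le_of_quadratic_nonneg:
  fixes a b c :: real
  assumes nonneg: "\<And>t. 0 \<le> a - 2 * t * b + t\<^sup>2 * b * c" and "0 \<le> a" "0 \<le> b" "0 \<le> c"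
  shows "b \<le> a * c"
proof (cases "c = 0")
  case True
  show ?thesis
  proof (rule ccontr)
    assume "\<not> b \<le> a * c"
    then have "b > 0" using True by simp
    have "0 \<le> a - 2 * ((a + 1) / (2 * b)) * b" using nonneg[of "(a + 1) / (2 * b)"] True by simp
    also have "\<dots> = -1" using \<open>b > 0\<close> by (simp add: field_simps)
    finally show False by simp
  qed
next
  case False
  then have "c > 0" using assms by simp
  have "0 \<le> a - 2 * (1 / c) * b + (1 / c)\<^sup>2 * b * c" by (rule nonneg)
  also have "\<dots> = a - b / c" using \<open>c > 0\<close> by (simp add: field_simps power2_eq_square)
  finally show ?thesis using \<open>c > 0\<close> by (simp add: field_simps)
qed

lemma pos_semidef_cauchy_schwarz:
  assumes "pos_semidef A"
  shows "(cmod (cinner x (A *v y)))\<^sup>2 \<le> Re (quad_form A x) * Re (quad_form A y)"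
proof -
  have herm: "hermitian_mat A" using assms by (simp add: pos_semidef_def)
  define b where "b = cinner y (A *v x)"
  have xy: "cinner x (A *v y) = cnj b" unfolding b_def by (rule cinner_hermitian[OF herm])
  have bb: "b * cnj b = of_real ((cmod b)\<^sup>2)" by (rule complex_norm_square[symmetric])
  have "0 \<le> Re (quad_form A x) - 2 * t * (cmod b)\<^sup>2 + t\<^sup>2 * (cmod b)\<^sup>2 * Re (quad_form A y)"
    for t :: real
  proof -
    have "0 \<le> Re (quad_form A (x + (- (of_real t * b)) *s y))"
      using assms by (simp add: pos_semidef_def)
    also have "quad_form A (x + (- (of_real t * b)) *s y) =
        quad_form A x - 2 * of_real t * (b * cnj b)
          + of_real t * of_real t * (b * cnj b) * quad_form A y"
      unfolding quad_form_add_scaled xy b_def[symmetric] by (simp add: algebra_simps)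
    also have "\<dots> = quad_form A x - of_real (2 * t * (cmod b)\<^sup>2)
        + of_real (t\<^sup>2 * (cmod b)\<^sup>2) * quad_form A y"
      unfolding bb by (simp add: power2_eq_square)
    finally show ?thesis by simp
  qed
  then have "(cmod b)\<^sup>2 \<le> Re (quad_form A x) * Re (quad_form A y)"
    by (rule discriminant_le_of_quadratic_nonneg) (use assms in \<open>simp_all add: pos_semidef_def\<close>)
  then show ?thesis by (simp add: xy)
qed

lemma matrix_vector_mult_axis_nth: "(M *v axis j 1) $ i = M $ i $ (j::'n::finite)"
  for M :: "'a::comm_ring_1 ^ 'n ^ 'm"
  by (simp add: matrix_vector_mult_def axis_def if_distrib cong: if_cong)

lemma cinner_axis_left: "cinner (axis i 1) y = y $ i"
proof -
  have "cinner (axis i 1) y = (\<Sum>j\<in>UNIV. if j = i then y $ j else 0)"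
    unfolding cinner_def by (intro sum.cong refl) (simp add: axis_def)
  then show ?thesis by simp
qed

lemma cinner_axis_mult_axis: "cinner (axis i 1) (M *v axis j 1) = M $ i $ j"
  by (simp add: cinner_axis_left matrix_vector_mult_axis_nth)

lemma quad_form_axis: "quad_form M (axis i 1) = M $ i $ i"
  by (simp add: quad_form_eq_cinner cinner_axis_mult_axis)

lemma pos_semidef_diag_real:
  assumes "pos_semidef M" shows "M $ i $ i = of_real (Re (M $ i $ i))"
  using assms unfolding pos_semidef_def hermitian_mat_def by (metis Reals_cnj_iff of_real_Re)

lemma pos_semidef_diag_nonneg: "pos_semidef M \<Longrightarrow> 0 \<le> Re (M $ i $ i)"
  by (metis pos_semidef_def quad_form_axis)

lemma pos_semidef_zero_diag_row:
  assumes "pos_semidef M" and "M $ i $ i = 0"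
  shows "M $ i $ j = 0"
proof -
  have "(cmod (M $ i $ j))\<^sup>2 \<le> Re (M $ i $ i) * Re (M $ j $ j)"
    using pos_semidef_cauchy_schwarz[OF assms(1), of "axis i 1" "axis j 1"]
    by (simp add: cinner_axis_mult_axis quad_form_axis)
  then show ?thesis using assms(2) by simp
qed

lemma hermitian_mat_add: "hermitian_mat A \<Longrightarrow> hermitian_mat B \<Longrightarrow> hermitian_mat (A + B)"
  by (simp add: hermitian_mat_def[of "A + B"] hermitian_mat_cnj)

lemma hermitian_mat_diff: "hermitian_mat A \<Longrightarrow> hermitian_mat B \<Longrightarrow> hermitian_mat (A - B)"
  by (simp add: hermitian_mat_def[of "A - B"] hermitian_mat_cnj)

lemma hermitian_mat_scaleR: "hermitian_mat A \<Longrightarrow> hermitian_mat (r *\<^sub>R A)"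
  unfolding hermitian_mat_def[of "r *\<^sub>R A"] vector_scaleR_component
  by (simp add: scaleR_conv_of_real hermitian_mat_cnj)

lemma hermitian_mat_one: "hermitian_mat (mat 1)"
  by (simp add: hermitian_mat_def mat_def)

lemma hermitian_outer: "hermitian_mat (outer v)"
  by (simp add: hermitian_mat_def outer_def)

lemma quad_form_zero_vec [simp]: "quad_form A 0 = 0"
  by (simp add: quad_form_def)

lemma quad_form_zero_mat [simp]: "quad_form 0 x = 0"
  by (simp add: quad_form_def)

lemma quad_form_add: "quad_form (A + B) x = quad_form A x + quad_form B x"
  by (simp add: quad_form_def algebra_simps sum.distrib)

lemma quad_form_diff: "quad_form (A - B) x = quad_form A x - quad_form B x"
  by (simp add: quad_form_def algebra_simps sum_subtractf)

lemma quad_form_scaleR: "quad_form (r *\<^sub>R A) x = of_real r * quad_form A x"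
  unfolding quad_form_def vector_scaleR_component
  by (simp add: scaleR_conv_of_real sum_distrib_left mult_ac)

lemma quad_form_sum: "quad_form (\<Sum>i\<in>S. A i) x = (\<Sum>i\<in>S. quad_form (A i) x)"
  by (induction S rule: infinite_finite_induct) (simp_all add: quad_form_add)

lemma quad_form_outer: "quad_form (outer v) x = of_real ((cmod (cinner x v))\<^sup>2)"
proof -
  have "quad_form (outer v) x = (\<Sum>i\<in>UNIV. cnj (x $ i) * v $ i) * (\<Sum>j\<in>UNIV. cnj (v $ j) * x $ j)"
    unfolding quad_form_def sum_product by (intro sum.cong refl) (simp add: outer_def mult_ac)
  also have "\<dots> = cinner x v * cnj (cinner x v)"
    by (simp add: cinner_def mult.commute)
  finally show ?thesis by (simp only: complex_norm_square)
qed

section \<open>Rank-one decompositions\<close>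

text \<open>
  If \<open>M $ a $ a = 0\<close>, division by \<open>sqrt 0 = 0\<close> makes \<open>pivot_vec M a = 0\<close>, so subtracting
  its outer product changes nothing and the induction in \<open>pos_semidef_sum_outer\<close> needs no case
  split on the pivot.
\<close>
definition pivot_vec :: "complex ^ 'n::finite ^ 'n \<Rightarrow> 'n \<Rightarrow> complex ^ 'n" where
  "pivot_vec M a = (\<chi> i. M $ i $ a / of_real (sqrt (Re (M $ a $ a))))"

lemma outer_pivot_vec:
  assumes "pos_semidef M"
  shows "outer (pivot_vec M a) $ i $ j = M $ i $ a * M $ a $ j / M $ a $ a"
proof -
  define s where "s = sqrt (Re (M $ a $ a))"
  have "s * s = Re (M $ a $ a)"
    using pos_semidef_diag_nonneg[OF assms, of a] by (simp add: s_def)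
  then have "of_real s * of_real s = M $ a $ a"
    by (metis of_real_mult pos_semidef_diag_real[OF assms])
  moreover have "cnj (M $ j $ a) = M $ a $ j"
    using assms unfolding pos_semidef_def hermitian_mat_def by metis
  moreover have
    "outer (pivot_vec M a) $ i $ j = M $ i $ a * cnj (M $ j $ a) / (of_real s * of_real s)"
    unfolding outer_def pivot_vec_def s_def[symmetric] by simp
  ultimately show ?thesis by simp
qed

lemma cinner_pivot_vec:
  "cinner x (pivot_vec M a) = cinner x (M *v axis a 1) / of_real (sqrt (Re (M $ a $ a)))"
  by (simp add: cinner_def pivot_vec_def matrix_vector_mult_axis_nth sum_divide_distrib)

lemma pos_semidef_minus_outer_pivot:
  assumes "pos_semidef M"
  shows "pos_semidef (M - outer (pivot_vec M a))"
proof -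
  define r where "r = Re (M $ a $ a)"
  have le: "(cmod (cinner x (pivot_vec M a)))\<^sup>2 \<le> Re (quad_form M x)" for x
  proof -
    have cs: "(cmod (cinner x (M *v axis a 1)))\<^sup>2 \<le> Re (quad_form M x) * r"
      using pos_semidef_cauchy_schwarz[OF assms, of x "axis a 1"]
      by (simp add: quad_form_axis r_def)
    have "(cmod (cinner x (pivot_vec M a)))\<^sup>2 = (cmod (cinner x (M *v axis a 1)))\<^sup>2 / r"
      using pos_semidef_diag_nonneg[OF assms, of a]
      by (simp add: cinner_pivot_vec norm_divide power_divide r_def)
    also have "\<dots> \<le> Re (quad_form M x)"
      using cs pos_semidef_diag_nonneg[OF assms, of a] pos_semidef_def assms
      by (cases "r = 0") (auto simp: r_def divide_le_eq)
    finally show ?thesis .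
  qed
  have "hermitian_mat (M - outer (pivot_vec M a))"
    using assms by (simp add: pos_semidef_def hermitian_mat_diff hermitian_outer)
  moreover have "0 \<le> Re (quad_form (M - outer (pivot_vec M a)) x)" for x
    using le[of x] by (simp add: quad_form_diff quad_form_outer)
  ultimately show ?thesis by (simp add: pos_semidef_def)
qed

lemma minus_outer_pivot_row:
  assumes "pos_semidef M"
  shows "(M - outer (pivot_vec M a)) $ a $ j = 0"
proof -
  have "(M - outer (pivot_vec M a)) $ a $ j = M $ a $ j - M $ a $ a * M $ a $ j / M $ a $ a"
    by (simp only: vector_minus_component outer_pivot_vec[OF assms])
  also have "\<dots> = 0"
    using pos_semidef_zero_diag_row[OF assms, of a j] by (cases "M $ a $ a = 0") simp_all
  finally show ?thesis .
qed

lemma pos_semidef_sum_outer: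
  fixes M :: "complex ^ 'n::finite ^ 'n"
  assumes "pos_semidef M" and "\<And>i j. M $ i $ j \<noteq> 0 \<Longrightarrow> i \<in> S \<and> j \<in> S"
  shows "\<exists>\<psi>s. (\<forall>\<psi>\<in>set \<psi>s. \<forall>i. \<psi> $ i \<noteq> 0 \<longrightarrow> i \<in> S) \<and> M = sum_list (map outer \<psi>s)"
proof -
  have "finite S" by simp
  from this assms show ?thesis
  proof (induction S arbitrary: M rule: finite_induct)
    case empty
    then have "M = 0" by (auto simp: vec_eq_iff)
    then show ?case by (intro exI[of _ "[]"]) simp
  next
    case (insert a T M)
    define v where "v = pivot_vec M a"
    define M' where "M' = M - outer v"
    have psd': "pos_semidef M'"
      unfolding M'_def v_def by (rule pos_semidef_minus_outer_pivot[OF insert.prems(1)])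
    have row: "M' $ a $ j = 0" for j
      unfolding M'_def v_def by (rule minus_outer_pivot_row[OF insert.prems(1)])
    have col: "M' $ j $ a = 0" for j
      using row[of j] hermitian_mat_cnj[of M' a j] psd' by (simp add: pos_semidef_def)
    have v_supp: "v $ i \<noteq> 0 \<Longrightarrow> i \<in> insert a T" for i
      using insert.prems(2)[of i a] by (auto simp: v_def pivot_vec_def)
    have "i \<in> T \<and> j \<in> T" if nz: "M' $ i $ j \<noteq> 0" for i j
    proof -
      have "i \<noteq> a" "j \<noteq> a" using nz row col by auto
      moreover have "M $ i $ j \<noteq> 0 \<or> (v $ i \<noteq> 0 \<and> v $ j \<noteq> 0)"
        using nz by (auto simp: M'_def outer_def)
      then have "i \<in> insert a T \<and> j \<in> insert a T"
        using insert.prems(2)[of i j] v_supp by blast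
      ultimately show ?thesis by simp
    qed
    then obtain \<psi>s where
      \<psi>s: "\<forall>\<psi>\<in>set \<psi>s. \<forall>i. \<psi> $ i \<noteq> 0 \<longrightarrow> i \<in> T" "M' = sum_list (map outer \<psi>s)"
      using insert.IH[OF psd'] by blast
    have "M = outer v + M'" by (simp add: M'_def)
    then have "M = sum_list (map outer (v # \<psi>s))"
      using \<psi>s(2) by simp
    then show ?case using \<psi>s(1) v_supp by (intro exI[of _ "v # \<psi>s"]) auto
  qed
qed

lemma BC_zero: "0 \<in> BC k"
  unfolding BC_def by (auto intro: exI[of _ "[]"])

lemma BC_add:
  assumes "A \<in> BC k" and "B \<in> BC k"
  shows "A + B \<in> BC k"
proof -
  obtain as bs where
    "\<forall>\<psi>\<in>set as. card (block_support \<psi>) \<le> k" "A = sum_list (map outer as)"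
    "\<forall>\<psi>\<in>set bs. card (block_support \<psi>) \<le> k" "B = sum_list (map outer bs)"
    using assms unfolding BC_def by blast
  then show ?thesis unfolding BC_def by (intro CollectI exI[of _ "as @ bs"]) auto
qed

lemma BC_sum: "(\<And>x. x \<in> S \<Longrightarrow> f x \<in> BC k) \<Longrightarrow> sum f S \<in> BC k"
  by (induction S rule: infinite_finite_induct) (auto intro: BC_add BC_zero)

definition supported_on_blocks :: "'k set \<Rightarrow> ('k::finite, 'd::finite) bmat \<Rightarrow> bool" where
  "supported_on_blocks G M \<longleftrightarrow> (\<forall>p q. M $ p $ q \<noteq> 0 \<longrightarrow> fst p \<in> G \<and> fst q \<in> G)"

lemma pos_semidef_in_BC:
  assumes "pos_semidef M" and "supported_on_blocks G M" and "card G \<le> k"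
  shows "M \<in> BC k"
proof -
  have "\<exists>\<psi>s. (\<forall>\<psi>\<in>set \<psi>s. \<forall>p. \<psi> $ p \<noteq> 0 \<longrightarrow> p \<in> {p. fst p \<in> G}) \<and>
      M = sum_list (map outer \<psi>s)"
    using assms(2) unfolding supported_on_blocks_def
    by (intro pos_semidef_sum_outer[OF assms(1)]) blast
  then obtain \<psi>s where
    \<psi>s: "\<forall>\<psi>\<in>set \<psi>s. \<forall>p. \<psi> $ p \<noteq> 0 \<longrightarrow> p \<in> {p. fst p \<in> G}"
    "M = sum_list (map outer \<psi>s)"
    by blast
  have supp: "block_support \<psi> \<subseteq> G" if "\<psi> \<in> set \<psi>s" for \<psi>
    using \<psi>s(1) that by (auto simp: block_support_def block_comp_def vec_eq_iff)
  have "card (block_support \<psi>) \<le> k" if "\<psi> \<in> set \<psi>s" for \<psi>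
    using card_mono[OF _ supp[OF that]] assms(3) by simp
  then show ?thesis unfolding BC_def using \<psi>s(2) by blast
qed

lemma opnorm_nonneg: "0 \<le> opnorm A"
  unfolding opnorm_def by (rule onorm_pos_le[OF matrix_vector_mul_bounded_linear])

lemma norm_matrix_vector_mult_le: "norm (A *v v) \<le> opnorm A * norm v"
  unfolding opnorm_def by (rule onorm[OF matrix_vector_mul_bounded_linear])

lemma norm_cinner_matrix_le: "cmod (cinner u (A *v w)) \<le> opnorm A * norm u * norm w"
proof -
  have "cmod (cinner u (A *v w)) \<le> norm u * norm (A *v w)" by (rule norm_cinner_le)
  also have "\<dots> \<le> norm u * (opnorm A * norm w)"
    by (rule mult_left_mono[OF norm_matrix_vector_mult_le norm_ge_zero])
  finally show ?thesis by (simp add: mult_ac)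
qed

lemma pos_def_imp_pos_semidef:
  assumes "pos_def A"
  shows "pos_semidef A"
proof -
  have "0 \<le> Re (quad_form A x)" for x
    using assms by (cases "x = 0") (auto simp: pos_def_def less_imp_le)
  then show ?thesis using assms by (simp add: pos_def_def pos_semidef_def)
qed

lemma pos_def_invertible:
  assumes "pos_def A"
  shows "invertible A"
proof -
  have "y = 0" if "A *v y = 0" for y
  proof -
    have "quad_form A y = 0" by (simp add: quad_form_eq_cinner that cinner_def)
    then show "y = 0" using assms by (auto simp: pos_def_def)
  qed
  then show ?thesis
    by (simp add: invertible_left_inverse matrix_left_invertible_ker)
qed

lemma pos_def_mult_matrix_inv:
  assumes "pos_def A"
  shows "A *v (matrix_inv A *v u) = u"
proof -
  have "A ** matrix_inv A = mat 1"
    using pos_def_invertible[OF assms] unfolding invertible_def matrix_inv_def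
    by (rule someI2_ex) simp
  then show ?thesis by (simp add: matrix_vector_mul_assoc)
qed

text \<open>
  With \<open>y = A\<^sup>-\<^sup>1 u\<close>, Cauchy-Schwarz gives
  \<open>\<parallel>u\<parallel>\<^sup>4 = |u\<^sup>* A y|\<^sup>2 \<le> (u\<^sup>* A u) (y\<^sup>* A y)\<close> and \<open>y\<^sup>* A y = y\<^sup>* u \<le> \<parallel>A\<^sup>-\<^sup>1\<parallel> \<parallel>u\<parallel>\<^sup>2\<close>.
\<close>
lemma pos_def_quad_form_ge:
  assumes "pos_def A"
  shows "inverse (opnorm (matrix_inv A)) * (norm u)\<^sup>2 \<le> Re (quad_form A u)"
proof -
  define N where "N = opnorm (matrix_inv A)"
  have psd: "pos_semidef A" using assms by (rule pos_def_imp_pos_semidef)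
  have Ay: "A *v (matrix_inv A *v u) = u" by (rule pos_def_mult_matrix_inv[OF assms])
  define y where "y = matrix_inv A *v u"
  have "Re (quad_form A y) \<le> cmod (cinner y u)"
    unfolding quad_form_eq_cinner y_def Ay by (rule complex_Re_le_cmod)
  also have "\<dots> \<le> norm y * norm u" by (rule norm_cinner_le)
  also have "\<dots> \<le> N * norm u * norm u"
    unfolding y_def N_def by (rule mult_right_mono[OF norm_matrix_vector_mult_le norm_ge_zero])
  finally have qy: "Re (quad_form A y) \<le> N * (norm u)\<^sup>2" by (simp add: power2_eq_square mult.assoc)
  have "((norm u)\<^sup>2)\<^sup>2 = (cmod (cinner u (A *v y)))\<^sup>2"
    unfolding y_def Ay cinner_self by (simp add: norm_power)
  also have "\<dots> \<le> Re (quad_form A u) * Re (quad_form A y)"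
    by (rule pos_semidef_cauchy_schwarz[OF psd])
  also have "\<dots> \<le> Re (quad_form A u) * (N * (norm u)\<^sup>2)"
    using qy psd by (simp add: mult_left_mono pos_semidef_def)
  finally have key: "((norm u)\<^sup>2)\<^sup>2 \<le> Re (quad_form A u) * (N * (norm u)\<^sup>2)" .
  show ?thesis
  proof (cases "N = 0 \<or> u = 0")
    case True
    then show ?thesis using psd by (auto simp: N_def[symmetric] pos_semidef_def)
  next
    case False
    then have "N > 0" "(norm u)\<^sup>2 > 0" using opnorm_nonneg[of "matrix_inv A"] by (auto simp: N_def)
    have "(norm u)\<^sup>2 * (norm u)\<^sup>2 \<le> (Re (quad_form A u) * N) * (norm u)\<^sup>2"
      using key unfolding power2_eq_square[of "(norm u)\<^sup>2"] by (simp only: mult.assoc)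
    then have "(norm u)\<^sup>2 \<le> Re (quad_form A u) * N"
      using \<open>(norm u)\<^sup>2 > 0\<close> by (rule mult_right_le_imp_le)
    then show ?thesis using \<open>N > 0\<close> by (simp add: N_def[symmetric] field_simps)
  qed
qed

definition block_embed :: "'k \<Rightarrow> 'k \<Rightarrow> complex ^ 'd ^ 'd \<Rightarrow> ('k::finite, 'd::finite) bmat" where
  "block_embed a b Y = (\<chi> p q. if fst p = a \<and> fst q = b then Y $ snd p $ snd q else 0)"

lemma sum_UNIV_prod: "(\<Sum>p\<in>UNIV. f p) = (\<Sum>a\<in>UNIV. \<Sum>i\<in>UNIV. f (a, i))"
  for f :: "'a::finite \<times> 'b::finite \<Rightarrow> 'c::comm_monoid_add"
  by (simp add: sum.cartesian_product UNIV_Times_UNIV[symmetric] del: UNIV_Times_UNIV)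

lemma sum_if_fst_eq:
  "(\<Sum>p\<in>UNIV. if fst p = a then f p else 0) = (\<Sum>i\<in>UNIV. f (a, i))"
  for f :: "'a::finite \<times> 'b::finite \<Rightarrow> 'c::comm_monoid_add"
proof -
  have "(\<Sum>p\<in>UNIV. if fst p = a then f p else 0) =
      (\<Sum>a'\<in>UNIV. \<Sum>i\<in>UNIV. if a' = a then f (a', i) else 0)"
    by (subst sum_UNIV_prod) simp
  also have "\<dots> = (\<Sum>i\<in>UNIV. \<Sum>a'\<in>UNIV. if a' = a then f (a', i) else 0)"
    by (rule sum.swap)
  finally show ?thesis by simp
qed

lemma sum_if_fst_eq2:
  "(\<Sum>p\<in>UNIV. \<Sum>q\<in>UNIV. if fst p = a \<and> fst q = b then f p q else 0) =
    (\<Sum>i\<in>UNIV. \<Sum>j\<in>UNIV. f (a, i) (b, j))"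
  for f :: "'a::finite \<times> 'b::finite \<Rightarrow> 'a \<times> 'b \<Rightarrow> 'c::comm_monoid_add"
proof -
  have "(\<Sum>q\<in>UNIV. if fst p = a \<and> fst q = b then f p q else 0) =
      (if fst p = a then \<Sum>j\<in>UNIV. f p (b, j) else 0)" for p
    by (cases "fst p = a") (simp_all add: sum_if_fst_eq)
  then show ?thesis by (simp add: sum_if_fst_eq)
qed

lemma quad_form_block_embed:
  "quad_form (block_embed a b Y) x = cinner (block_comp x a) (Y *v block_comp x b)"
proof -
  have "quad_form (block_embed a b Y) x = (\<Sum>p\<in>UNIV. \<Sum>q\<in>UNIV.
      if fst p = a \<and> fst q = b then cnj (x $ p) * Y $ snd p $ snd q * x $ q else 0)"
    unfolding quad_form_def by (intro sum.cong refl) (simp add: block_embed_def)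
  also have "\<dots> = (\<Sum>i\<in>UNIV. \<Sum>j\<in>UNIV. cnj (x $ (a, i)) * Y $ i $ j * x $ (b, j))"
    by (simp add: sum_if_fst_eq2)
  also have "\<dots> = cinner (block_comp x a) (Y *v block_comp x b)"
    by (simp add: cinner_def matrix_vector_mult_def block_comp_def sum_distrib_left mult.assoc)
  finally show ?thesis .
qed

lemma sum_block_embed_blk: "(\<Sum>a\<in>UNIV. \<Sum>b\<in>UNIV. block_embed a b (blk X a b)) = X"
proof -
  have "(\<Sum>a\<in>UNIV. \<Sum>b\<in>UNIV. block_embed a b (blk X a b)) $ (a0, i) $ (b0, j) = X $ (a0, i) $ (b0, j)"
    for a0 i b0 j
  proof -
    have "(\<Sum>a\<in>UNIV. \<Sum>b\<in>UNIV. block_embed a b (blk X a b)) $ (a0, i) $ (b0, j) =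
        (\<Sum>a\<in>UNIV. \<Sum>b\<in>UNIV. if b = b0 then if a = a0 then X $ (a, i) $ (b, j) else 0 else 0)"
      unfolding sum_component block_embed_def blk_def vec_lambda_beta by (intro sum.cong refl) auto
    then show ?thesis by simp
  qed
  then show ?thesis by (simp add: vec_eq_iff split_paired_All)
qed

lemma block_comp_block_vec:
  "block_comp (\<chi> p. if fst p = g then u $ snd p else 0) a = (if a = g then u else 0)"
  by (simp add: block_comp_def vec_eq_iff)

lemma quad_form_block_vec:
  fixes X :: "('k::finite, 'd::finite) bmat"
  shows "quad_form X (\<chi> p. if fst p = g then u $ snd p else 0) = quad_form (blk X g g) u"
proof -
  let ?x = "(\<chi> p. if fst p = g then u $ snd p else 0) :: ('k, 'd) bvec"
  have "quad_form X ?x = (\<Sum>a\<in>UNIV. \<Sum>b\<in>UNIV. quad_form (block_embed a b (blk X a b)) ?x)"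
    by (subst (1) sum_block_embed_blk[symmetric, of X]) (simp add: quad_form_sum)
  also have "\<dots> = (\<Sum>a\<in>UNIV. \<Sum>b\<in>UNIV.
      cinner (if a = g then u else 0) (blk X a b *v (if b = g then u else 0)))"
    by (simp add: quad_form_block_embed block_comp_block_vec)
  also have "\<dots> = cinner u (blk X g g *v u)"
  proof -
    have "cinner (if a = g then u else 0) (blk X a b *v (if b = g then u else 0)) =
        (if b = g then if a = g then cinner u (blk X g g *v u) else 0 else 0)" for a b
      by (simp add: cinner_def)
    then show ?thesis by simp
  qed
  finally show ?thesis by (simp add: quad_form_eq_cinner)
qed

lemma hermitian_blk_diag: "hermitian_mat X \<Longrightarrow> hermitian_mat (blk X g g)"
  unfolding hermitian_mat_def[of "blk X g g"] by (simp add: blk_def hermitian_mat_cnj)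

lemma pos_def_blk_diag:
  fixes X :: "('k::finite, 'd::finite) bmat"
  assumes "pos_def X"
  shows "pos_def (blk X g g)"
proof -
  have "quad_form (blk X g g) u \<in> \<real> \<and> 0 < Re (quad_form (blk X g g) u)" if "u \<noteq> 0" for u
  proof -
    let ?x = "(\<chi> p. if fst p = g then u $ snd p else 0) :: ('k, 'd) bvec"
    have "block_comp ?x g \<noteq> 0" using that by (simp add: block_comp_block_vec)
    then have "?x \<noteq> 0" by (auto simp: block_comp_def vec_eq_iff)
    then show ?thesis using assms unfolding pos_def_def quad_form_block_vec[symmetric] by blast
  qed
  then show ?thesis using assms by (simp add: pos_def_def hermitian_blk_diag)
qed

lemma cnj_block_embed:
  assumes "\<And>i j. cnj (Y $ i $ j) = Z $ j $ i"
  shows "cnj (block_embed a b Y $ p $ q) = block_embed b a Z $ q $ p"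
  using assms by (auto simp: block_embed_def)

lemma hermitian_block_embed_diag: "hermitian_mat Y \<Longrightarrow> hermitian_mat (block_embed a a Y)"
  unfolding hermitian_mat_def[of "block_embed a a Y"]
  by (metis cnj_block_embed hermitian_mat_cnj complex_cnj_cnj)

lemma hermitian_block_embed_pair:
  assumes "\<And>i j. cnj (Y $ i $ j) = Z $ j $ i"
  shows "hermitian_mat (block_embed a b Y + block_embed b a Z)"
proof -
  have "cnj (Z $ i $ j) = Y $ j $ i" for i j by (metis assms complex_cnj_cnj)
  then have "cnj (block_embed a b Y $ q $ p) = block_embed b a Z $ p $ q"
    "cnj (block_embed b a Z $ q $ p) = block_embed a b Y $ p $ q" for p q
    by (simp_all add: cnj_block_embed assms)
  then show ?thesis by (simp add: hermitian_mat_def add.commute)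
qed

lemma supported_on_blocks_block_embed: "a \<in> G \<Longrightarrow> b \<in> G \<Longrightarrow> supported_on_blocks G (block_embed a b Y)"
  by (simp add: supported_on_blocks_def block_embed_def)

lemma supported_on_blocks_add:
  "supported_on_blocks G A \<Longrightarrow> supported_on_blocks G B \<Longrightarrow> supported_on_blocks G (A + B)"
  unfolding supported_on_blocks_def by (metis add.right_neutral vector_add_component)

lemma supported_on_blocks_diff:
  "supported_on_blocks G A \<Longrightarrow> supported_on_blocks G B \<Longrightarrow> supported_on_blocks G (A - B)"
  unfolding supported_on_blocks_def by (metis diff_zero vector_minus_component)

lemma supported_on_blocks_scaleR: "supported_on_blocks G A \<Longrightarrow> supported_on_blocks G (r *\<^sub>R A)"
  unfolding supported_on_blocks_def by (metis scale_zero_right vector_scaleR_component)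

section \<open>Splitting a block diagonally dominant matrix\<close>

lemma arith_geo_mean_sq_le:
  fixes t p q :: real
  assumes "0 \<le> p" "0 \<le> q" "t\<^sup>2 \<le> p * q"
  shows "t \<le> (p + q) / 2"
  using real_le_rsqrt[OF assms(3)] arith_geo_mean_sqrt[OF assms(1,2)] by linarith

definition offdiag_norm_sum :: "('k::finite, 'd::finite) bmat \<Rightarrow> 'k \<Rightarrow> real" where
  "offdiag_norm_sum X a = (\<Sum>b\<in>UNIV - {a}. opnorm (blk X a b))"

text \<open>
  Summed over the ordered pairs \<open>(a, b)\<close> with \<open>b \<noteq> a\<close>, the identity paddings of the
  \<open>pair_part\<close>s add up to \<open>offdiag_norm_sum X a\<close> on block \<open>a\<close>, which \<open>diag_part\<close> removes again.
\<close>
definition pair_part :: "('k::finite, 'd::finite) bmat \<Rightarrow> 'k \<Rightarrow> 'k \<Rightarrow> ('k, 'd) bmat" where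
  "pair_part X a b = (1 / 2) *\<^sub>R
     (block_embed a b (blk X a b) + block_embed b a (blk X b a)
      + opnorm (blk X a b) *\<^sub>R block_embed a a (mat 1)
      + opnorm (blk X b a) *\<^sub>R block_embed b b (mat 1))"

definition diag_part :: "('k::finite, 'd::finite) bmat \<Rightarrow> 'k \<Rightarrow> ('k, 'd) bmat" where
  "diag_part X a = block_embed a a (blk X a a) - offdiag_norm_sum X a *\<^sub>R block_embed a a (mat 1)"

lemma pos_semidef_pair_part:
  assumes "hermitian_mat X"
  shows "pos_semidef (pair_part X a b)"
proof -
  have "0 \<le> Re (quad_form (pair_part X a b) x)" for x
  proof -
    define u w where "u = block_comp x a" and "w = block_comp x b"
    define z where "z = cinner u (blk X a b *v w)"
    define r s where "r = opnorm (blk X a b) * (norm u)\<^sup>2" and "s = opnorm (blk X b a) * (norm w)\<^sup>2"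
    have adj: "cinner w (blk X b a *v u) = cnj z"
      unfolding z_def using assms by (intro cinner_adjoint) (simp add: blk_def hermitian_mat_cnj)
    have re: "Re (quad_form (pair_part X a b) x) = Re z + (r + s) / 2"
      by (simp add: pair_part_def quad_form_add quad_form_scaleR quad_form_block_embed cinner_self
          adj r_def s_def u_def[symmetric] w_def[symmetric] z_def[symmetric])
    have "cmod z \<le> opnorm (blk X a b) * norm u * norm w"
      unfolding z_def by (rule norm_cinner_matrix_le)
    moreover have "cmod z \<le> opnorm (blk X b a) * norm w * norm u"
      using norm_cinner_matrix_le[of w "blk X b a" u] by (simp add: adj)
    ultimately have "cmod z * cmod z
        \<le> (opnorm (blk X a b) * norm u * norm w) * (opnorm (blk X b a) * norm w * norm u)"
      by (intro mult_mono) (simp_all add: opnorm_nonneg)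
    also have "\<dots> = r * s" by (simp add: r_def s_def power2_eq_square mult_ac)
    finally have "(cmod z)\<^sup>2 \<le> r * s" by (simp add: power2_eq_square)
    then have "cmod z \<le> (r + s) / 2"
      by (rule arith_geo_mean_sq_le[rotated 2]) (simp_all add: r_def s_def opnorm_nonneg)
    then show ?thesis unfolding re using abs_Re_le_cmod[of z] by linarith
  qed
  moreover have "hermitian_mat (pair_part X a b)"
    unfolding pair_part_def
    using assms
    by (intro hermitian_mat_scaleR hermitian_mat_add hermitian_block_embed_pair
        hermitian_block_embed_diag hermitian_mat_one) (simp add: blk_def hermitian_mat_cnj)
  ultimately show ?thesis by (simp add: pos_semidef_def)
qed

lemma pos_semidef_diag_part:
  assumes "pos_def X" and "block_diag_dominant X"
  shows "pos_semidef (diag_part X a)"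
proof -
  have pd: "pos_def (blk X a a)" using assms(1) by (rule pos_def_blk_diag)
  have "0 \<le> Re (quad_form (diag_part X a) x)" for x
  proof -
    have "offdiag_norm_sum X a * (norm (block_comp x a))\<^sup>2
        \<le> inverse (opnorm (matrix_inv (blk X a a))) * (norm (block_comp x a))\<^sup>2"
      using assms(2)
      by (intro mult_right_mono) (auto simp: block_diag_dominant_def offdiag_norm_sum_def)
    also have "\<dots> \<le> Re (quad_form (blk X a a) (block_comp x a))"
      by (rule pos_def_quad_form_ge[OF pd])
    finally show ?thesis
      by (simp add: diag_part_def quad_form_diff quad_form_scaleR quad_form_block_embed
          quad_form_eq_cinner[of "blk X a a"] cinner_self)
  qed
  moreover have "hermitian_mat (diag_part X a)"
    using pd unfolding diag_part_def pos_def_def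
    by (intro hermitian_mat_diff hermitian_mat_scaleR hermitian_block_embed_diag hermitian_mat_one)
      simp
  ultimately show ?thesis by (simp add: pos_semidef_def)
qed

lemma supported_on_blocks_pair_part: "supported_on_blocks {a, b} (pair_part X a b)"
  unfolding pair_part_def
  by (intro supported_on_blocks_scaleR supported_on_blocks_add supported_on_blocks_block_embed)
    simp_all

lemma supported_on_blocks_diag_part: "supported_on_blocks {a} (diag_part X a)"
  unfolding diag_part_def
  by (intro supported_on_blocks_diff supported_on_blocks_scaleR supported_on_blocks_block_embed)
    simp_all

lemma sum_offdiag_swap:
  "(\<Sum>a\<in>UNIV. \<Sum>b\<in>UNIV - {a}. f a b) = (\<Sum>a\<in>UNIV. \<Sum>b\<in>UNIV - {a}. f b a)"
  for f :: "'k::finite \<Rightarrow> 'k \<Rightarrow> 'c::comm_monoid_add"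
proof -
  have "(\<Sum>a\<in>UNIV. \<Sum>b\<in>{b. b \<in> UNIV \<and> a \<noteq> b}. f a b) =
      (\<Sum>b\<in>UNIV. \<Sum>a\<in>{a. a \<in> UNIV \<and> a \<noteq> b}. f a b)"
    by (rule sum.swap_restrict) simp_all
  moreover have "{b. b \<in> UNIV \<and> a \<noteq> b} = UNIV - {a}" "{b. b \<in> UNIV \<and> b \<noteq> a} = UNIV - {a}"
    for a :: 'k by auto
  ultimately show ?thesis by (simp only:)
qed

lemma sum_pair_parts_diag_parts:
  fixes X :: "('k::finite, 'd::finite) bmat"
  shows "(\<Sum>a\<in>UNIV. \<Sum>b\<in>UNIV - {a}. pair_part X a b) + (\<Sum>a\<in>UNIV. diag_part X a) = X"
proof -
  define E where "E a b = block_embed a b (blk X a b)" for a b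
  define J where "J a = (block_embed a a (mat 1) :: ('k, 'd) bmat)" for a
  define I where "I a = offdiag_norm_sum X a *\<^sub>R J a" for a
  have "(\<Sum>a\<in>UNIV. \<Sum>b\<in>UNIV - {a}. pair_part X a b) =
      (1 / 2) *\<^sub>R (\<Sum>a\<in>UNIV. \<Sum>b\<in>UNIV - {a}.
        E a b + E b a + opnorm (blk X a b) *\<^sub>R J a + opnorm (blk X b a) *\<^sub>R J b)"
    by (simp add: pair_part_def E_def J_def scaleR_sum_right)
  also have "(\<Sum>a\<in>UNIV. \<Sum>b\<in>UNIV - {a}.
        E a b + E b a + opnorm (blk X a b) *\<^sub>R J a + opnorm (blk X b a) *\<^sub>R J b) =
      2 *\<^sub>R (\<Sum>a\<in>UNIV. \<Sum>b\<in>UNIV - {a}. E a b) + 2 *\<^sub>R (\<Sum>a\<in>UNIV. I a)"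
  proof -
    have "(\<Sum>a\<in>UNIV. \<Sum>b\<in>UNIV - {a}. opnorm (blk X a b) *\<^sub>R J a) = (\<Sum>a\<in>UNIV. I a)"
      by (simp add: I_def offdiag_norm_sum_def scaleR_sum_left)
    then show ?thesis
      using sum_offdiag_swap[of E] sum_offdiag_swap[of "\<lambda>a b. opnorm (blk X a b) *\<^sub>R J a"]
      by (simp add: sum.distrib scaleR_2)
  qed
  finally have pairs: "(\<Sum>a\<in>UNIV. \<Sum>b\<in>UNIV - {a}. pair_part X a b) =
      (\<Sum>a\<in>UNIV. \<Sum>b\<in>UNIV - {a}. E a b) + (\<Sum>a\<in>UNIV. I a)"
    by (simp add: scaleR_add_right)
  have diags: "(\<Sum>a\<in>UNIV. diag_part X a) = (\<Sum>a\<in>UNIV. E a a) - (\<Sum>a\<in>UNIV. I a)"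
    by (simp add: diag_part_def E_def I_def J_def sum_subtractf)
  have "X = (\<Sum>a\<in>UNIV. \<Sum>b\<in>UNIV. E a b)"
    by (simp add: E_def sum_block_embed_blk)
  also have "\<dots> = (\<Sum>a\<in>UNIV. E a a + (\<Sum>b\<in>UNIV - {a}. E a b))"
    by (intro sum.cong refl sum.remove) simp_all
  finally show ?thesis unfolding pairs diags by (simp add: sum.distrib)
qed

theorem mainTheorem5:
  fixes X :: "('k::finite, 'd::finite) bmat"
  assumes "pos_def X"
    and "block_diag_dominant X"
  shows "X \<in> BC 2"
proof -
  have herm: "hermitian_mat X" using assms(1) by (simp add: pos_def_def)
  have "pair_part X a b \<in> BC 2" for a b
    using pos_semidef_pair_part[OF herm] supported_on_blocks_pair_part
    by (rule pos_semidef_in_BC) (simp add: card_insert_if)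
  moreover have "diag_part X a \<in> BC 2" for a
    using pos_semidef_diag_part[OF assms] supported_on_blocks_diag_part
    by (rule pos_semidef_in_BC) simp
  ultimately have "(\<Sum>a\<in>UNIV. \<Sum>b\<in>UNIV - {a}. pair_part X a b) + (\<Sum>a\<in>UNIV. diag_part X a) \<in> BC 2"
    by (intro BC_add BC_sum)
  then show ?thesis by (simp only: sum_pair_parts_diag_parts)
qed

end
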